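(* Fix an integer $d\ge1$. For every $0<a<b$ there is a constant $C(a,b)$ (depending only on $a,b,d$, not on $n$) such that $L$ is $C(a,b)$-Lipschitz on $\{x:a\le\|x\|\le b\}$, and for every $a>0$ there is $C(a)$ (depending only on $a,d$) such that $\|\nabla^2L(x)\|_{op}\le C(a)$ at every point $x$ with $\|x\|\ge a$ where $L$ is twice differentiable.
   Context: $e_1=(1,0,\dots,0)\in\mathbb{R}^n$; for $x\neq0$, $\theta(x)\in[0,\pi]$ is the angle between $x$ and $e_1$. $g(\theta)=\arccos\big(\frac{(\pi-\theta)\cos\theta+\sin\theta}{\pi}\big)$ and $g^{\circ d}$ is its $d$-fold composition. The loss is $L(x)=\frac12\|x\|^2-\|x\|\cos\big(g^{\circ d}(\theta(x))\big)+\frac12$. *)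

theory Defs
  imports Complex_Main
begin

text \<open>Since the constants must be uniform in the dimension n, the dimension cannot be
a type parameter. We model R^n explicitly: a point of R^n is a function
x :: nat => real with x i = 0 for all i >= n (coordinates 0..n-1; e_1 is coordinate 0).\<close>

definition Rn :: "nat \<Rightarrow> (nat \<Rightarrow> real) set" where
  "Rn n = {x. \<forall>i\<ge>n. x i = 0}"

definition vadd :: "(nat \<Rightarrow> real) \<Rightarrow> (nat \<Rightarrow> real) \<Rightarrow> (nat \<Rightarrow> real)" where
  "vadd x y = (\<lambda>i. x i + y i)"

definition vsub :: "(nat \<Rightarrow> real) \<Rightarrow> (nat \<Rightarrow> real) \<Rightarrow> (nat \<Rightarrow> real)" where
  "vsub x y = (\<lambda>i. x i - y i)"

definition vinner :: "nat \<Rightarrow> (nat \<Rightarrow> real) \<Rightarrow> (nat \<Rightarrow> real) \<Rightarrow> real" where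
  "vinner n x y = (\<Sum>i<n. x i * y i)"

definition vnorm :: "nat \<Rightarrow> (nat \<Rightarrow> real) \<Rightarrow> real" where
  "vnorm n x = sqrt (\<Sum>i<n. (x i)^2)"

definition e1 :: "nat \<Rightarrow> real" where
  "e1 = (\<lambda>i. if i = 0 then 1 else 0)"

definition vangle :: "nat \<Rightarrow> (nat \<Rightarrow> real) \<Rightarrow> real" where
  "vangle n x = arccos (vinner n x e1 / vnorm n x)"

definition gmap :: "real \<Rightarrow> real" where
  "gmap t = arccos (((pi - t) * cos t + sin t) / pi)"

definition loss :: "nat \<Rightarrow> nat \<Rightarrow> (nat \<Rightarrow> real) \<Rightarrow> real" where
  "loss d n x = (1/2) * (vnorm n x)^2 - vnorm n x * cos ((gmap ^^ d) (vangle n x)) + 1/2"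

definition mv :: "nat \<Rightarrow> (nat \<Rightarrow> nat \<Rightarrow> real) \<Rightarrow> (nat \<Rightarrow> real) \<Rightarrow> (nat \<Rightarrow> real)" where
  "mv n H h = (\<lambda>i. if i < n then (\<Sum>j<n. H i j * h j) else 0)"

definition has_grad :: "nat \<Rightarrow> ((nat \<Rightarrow> real) \<Rightarrow> real) \<Rightarrow> (nat \<Rightarrow> real) \<Rightarrow> (nat \<Rightarrow> real) \<Rightarrow> bool" where
  "has_grad n f G x \<longleftrightarrow> G \<in> Rn n \<and>
     (\<forall>e>0. \<exists>\<delta>>0. \<forall>h\<in>Rn n. vnorm n h < \<delta> \<longrightarrow>
        \<bar>f (vadd x h) - f x - vinner n G h\<bar> \<le> e * vnorm n h)"

definition twice_diff_hess :: "nat \<Rightarrow> ((nat \<Rightarrow> real) \<Rightarrow> real) \<Rightarrow> (nat \<Rightarrow> real) \<Rightarrow> (nat \<Rightarrow> nat \<Rightarrow> real) \<Rightarrow> bool" where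
  "twice_diff_hess n f x H \<longleftrightarrow> (\<exists>r>0. \<exists>G.
     (\<forall>y\<in>Rn n. vnorm n (vsub y x) < r \<longrightarrow> has_grad n f (G y) y) \<and>
     (\<forall>e>0. \<exists>\<delta>>0. \<forall>h\<in>Rn n. vnorm n h < \<delta> \<longrightarrow>
        vnorm n (vsub (vsub (G (vadd x h)) (G x)) (mv n H h)) \<le> e * vnorm n h))"

definition opnorm :: "nat \<Rightarrow> (nat \<Rightarrow> nat \<Rightarrow> real) \<Rightarrow> real" where
  "opnorm n H = Sup {vnorm n (mv n H v) | v. v \<in> Rn n \<and> vnorm n v \<le> 1}"

end

theory Submission
  imports Defs "HOL-Analysis.Analysis"
begin

text \<open>Writing \<open>c = cos \<theta>\<close>, the angle map is \<open>g (arccos c) = arccos (\<kappa> c)\<close> for the arc-cosine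
  kernel \<open>\<kappa>\<close>, so \<open>L x = \<bar>x\<bar>\<^sup>2/2 - \<bar>x\<bar> \<kappa>\<^sup>d(c) + 1/2\<close> with \<open>c = x\<^sub>0/\<bar>x\<bar>\<close>. Since
  \<open>\<kappa>' c = 1 - arccos c / pi \<in> [0,1]\<close>, the iterate \<open>\<kappa>\<^sup>d\<close> is 1-Lipschitz with derivative
  \<open>F = \<Prod>\<^sub>j<d \<kappa>'(\<kappa>\<^sup>j c)\<close>, a product of factors \<open>1 - g\<^sup>j(\<theta>)/pi\<close>; as \<open>g\<close> is 1-Lipschitz on
  \<open>[0,pi]\<close>, \<open>F\<close> is \<open>d\<close>-Lipschitz in the angle \<open>\<theta>\<close>, and \<open>\<theta>\<close> is 3-Lipschitz in \<open>x/\<bar>x\<bar>\<close>.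
  Hence on \<open>\<bar>x\<bar> \<ge> a\<close> both \<open>L\<close> (on bounded annuli) and its gradient
  \<open>x - (\<kappa>\<^sup>d(c) - c F) x/\<bar>x\<bar> - F e\<^sub>1\<close> are Lipschitz with constants independent of the
  dimension, and a Hessian is bounded in operator norm by any local Lipschitz constant of the
  gradient.\<close>

lemma lipschitz_on_Icc_of_deriv_bound:
  fixes f :: "real \<Rightarrow> real"
  assumes "a < b" and "continuous_on {a..b} f" and "0 \<le> M"
    and "\<And>x. a < x \<Longrightarrow> x < b \<Longrightarrow> (f has_real_derivative f' x) (at x)"
    and "\<And>x. a < x \<Longrightarrow> x < b \<Longrightarrow> \<bar>f' x\<bar> \<le> M"
  shows "M-lipschitz_on {a..b} f"
proof -
  have "M-lipschitz_on {a<..<b} f"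
  proof (rule bounded_derivative_imp_lipschitz)
    fix x :: real assume "x \<in> {a<..<b}"
    then show "(f has_derivative (*) (f' x)) (at x within {a<..<b})"
      using assms(4) by (auto intro: has_derivative_at_withinI
          simp: has_field_derivative_imp_has_derivative)
    show "onorm ((*) (f' x)) \<le> M"
      using \<open>x \<in> {a<..<b}\<close> assms(5) by (auto intro: order_trans[OF onorm_le] simp: abs_mult)
  qed (use assms in auto)
  then show ?thesis
    using lipschitz_on_closure[of M "{a<..<b}" f] assms(1,2) by simp
qed

lemma has_real_derivative_remainder_le:
  assumes "(\<phi> has_real_derivative D) (at z0 within S)" "0 < e"
  obtains \<rho> where "\<rho> > 0"
    "\<And>z. z \<in> S \<Longrightarrow> \<bar>z - z0\<bar> < \<rho> \<Longrightarrow> \<bar>\<phi> z - \<phi> z0 - D * (z - z0)\<bar> \<le> e * \<bar>z - z0\<bar>"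
proof -
  have "((\<lambda>y. (\<phi> y - \<phi> z0) / (y - z0)) \<longlongrightarrow> D) (at z0 within S)"
    using assms(1) has_field_derivative_iff by blast
  from tendstoD[OF this assms(2)] obtain \<rho> where "\<rho> > 0"
    and \<rho>: "\<forall>z\<in>S. z \<noteq> z0 \<and> dist z z0 < \<rho> \<longrightarrow> dist ((\<phi> z - \<phi> z0) / (z - z0)) D < e"
    unfolding eventually_at by blast
  have "\<bar>\<phi> z - \<phi> z0 - D * (z - z0)\<bar> \<le> e * \<bar>z - z0\<bar>" if "z \<in> S" "\<bar>z - z0\<bar> < \<rho>" for z
  proof (cases "z = z0")
    case False
    then have "\<phi> z - \<phi> z0 - D * (z - z0) = ((\<phi> z - \<phi> z0) / (z - z0) - D) * (z - z0)"
      by (simp add: field_simps)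
    moreover have "\<bar>(\<phi> z - \<phi> z0) / (z - z0) - D\<bar> < e"
      using \<rho> that False by (auto simp: dist_real_def)
    ultimately show ?thesis
      by (simp add: abs_mult mult_right_mono)
  qed simp
  with \<open>\<rho> > 0\<close> show ?thesis
    using that by blast
qed

lemma funpow_in_invariant: "f ` S \<subseteq> S \<Longrightarrow> x \<in> S \<Longrightarrow> (f ^^ j) x \<in> S"
  by (induction j) auto

lemma lipschitz_on_funpow:
  assumes "C-lipschitz_on S f" "f ` S \<subseteq> S"
  shows "(C ^ j)-lipschitz_on S (f ^^ j)"
proof (induction j)
  case 0
  then show ?case
    by (simp add: lipschitz_on_id)
next
  case (Suc j)
  have "(C ^ j * C)-lipschitz_on S (f ^^ j \<circ> f)"
    by (rule lipschitz_on_compose[OF assms(1) lipschitz_on_subset[OF Suc.IH assms(2)]])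
  then show ?case
    by (simp add: funpow_Suc_right mult.commute del: funpow.simps)
qed

lemma sin_ge_third: "0 \<le> s \<Longrightarrow> s \<le> 2 \<Longrightarrow> s / 3 \<le> sin (s::real)"
proof -
  assume s: "0 \<le> s" "s \<le> 2"
  have "\<bar>sin s - s\<bar> \<le> s ^ 3 / 6"
    using Maclaurin_sin_bound[of s 3] s by (simp add: sin_coeff_def numeral_3_eq_3 fact_numeral)
  moreover have "s ^ 3 \<le> 4 * s"
  proof -
    have "s * s\<^sup>2 \<le> s * 2\<^sup>2"
      using s by (intro mult_left_mono power_mono) auto
    then show ?thesis
      by (simp add: power3_eq_cube power2_eq_square mult.commute mult.assoc)
  qed
  ultimately show ?thesis
    unfolding abs_le_iff by linarith
qed

lemma sq_le_nine_chord_sq: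
  assumes "\<bar>t\<bar> \<le> pi"
  shows "t\<^sup>2 \<le> 9 * (2 - 2 * cos (t::real))"
proof -
  define s where "s = \<bar>t\<bar> / 2"
  have "s / 3 \<le> sin s"
    using assms pi_less_4 by (intro sin_ge_third) (auto simp: s_def)
  then have "(s / 3)\<^sup>2 \<le> (sin s)\<^sup>2"
    by (rule power_mono) (simp add: s_def)
  moreover have "cos t = 1 - 2 * (sin s)\<^sup>2"
    using cos_double_sin[of s] by (simp add: s_def)
  ultimately show ?thesis
    by (simp add: s_def power_divide)
qed


section \<open>The arc-cosine kernel\<close>

definition kappa :: "real \<Rightarrow> real" where
  "kappa c = (sqrt (1 - c\<^sup>2) + (pi - arccos c) * c) / pi"

definition kappa_deriv :: "real \<Rightarrow> real" where
  "kappa_deriv c = (pi - arccos c) / pi"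

lemma kappa_deriv_bounds: "-1 \<le> c \<Longrightarrow> c \<le> 1 \<Longrightarrow> 0 \<le> kappa_deriv c \<and> kappa_deriv c \<le> 1"
  using arccos_lbound[of c] arccos_ubound[of c] pi_gt_zero
  by (auto simp: kappa_deriv_def field_simps)

lemma kappa_has_real_derivative:
  assumes "-1 < c" "c < 1"
  shows "(kappa has_real_derivative kappa_deriv c) (at c)"
proof -
  have s: "sqrt (1 - c\<^sup>2) > 0"
    using assms by (simp add: abs_square_less_1)
  have "(kappa has_real_derivative
         ((- c) / sqrt (1 - c\<^sup>2) + ((pi - arccos c) + c / sqrt (1 - c\<^sup>2))) / pi) (at c)"
    unfolding kappa_def[abs_def] using assms s
    by (auto intro!: derivative_eq_intros simp: field_simps)
  then show ?thesis
    by (simp add: kappa_deriv_def)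
qed

lemma continuous_on_kappa: "continuous_on {-1..1} kappa"
  unfolding kappa_def[abs_def]
  by (intro continuous_intros) (auto simp: abs_square_le_1)

lemma continuous_on_kappa_deriv: "continuous_on {-1..1} kappa_deriv"
  unfolding kappa_deriv_def[abs_def]
  by (intro continuous_intros) auto

lemma kappa_has_integral:
  assumes "-1 \<le> u" "u \<le> v" "v \<le> 1"
  shows "(kappa_deriv has_integral (kappa v - kappa u)) {u..v}"
proof (rule fundamental_theorem_of_calculus_interior)
  show "continuous_on {u..v} kappa"
    using continuous_on_kappa continuous_on_subset assms by fastforce
  fix x assume "x \<in> {u<..<v}"
  then show "(kappa has_vector_derivative kappa_deriv x) (at x)"
    using kappa_has_real_derivative[of x] assms
    by (auto simp: has_real_derivative_iff_has_vector_derivative[symmetric])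
qed (use assms in auto)

text \<open>At the endpoints \<open>\<pm>1\<close> the square root is not differentiable, but the one-sided
  derivatives still exist: \<open>kappa\<close> is an integral of the continuous function \<open>kappa_deriv\<close>.\<close>
lemma kappa_has_real_derivative_within:
  assumes "-1 \<le> c" "c \<le> 1"
  shows "(kappa has_real_derivative kappa_deriv c) (at c within {-1..1})"
proof (rule has_field_derivative_transform_within[where d=1])
  show "((\<lambda>u. kappa (-1) + integral {-1..u} kappa_deriv) has_real_derivative kappa_deriv c)
          (at c within {-1..1})"
    using integral_has_real_derivative[OF continuous_on_kappa_deriv] assms
    by (auto intro!: derivative_eq_intros)
  show "kappa (-1) + integral {-1..x} kappa_deriv = kappa x" if "x \<in> {-1..1}" for x
    using kappa_has_integral[of "-1" x] that by (auto dest: integral_unique)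
qed (use assms in auto)

lemma kappa_range:
  assumes "-1 \<le> c" "c \<le> 1"
  shows "0 \<le> kappa c \<and> kappa c \<le> 1"
proof -
  have "0 \<le> kappa c - kappa (-1)"
    by (rule has_integral_nonneg[OF kappa_has_integral[of "-1" c]])
       (use assms kappa_deriv_bounds in auto)
  moreover have "0 \<le> kappa 1 - kappa c"
    by (rule has_integral_nonneg[OF kappa_has_integral[of c 1]])
       (use assms kappa_deriv_bounds in auto)
  moreover have "kappa (-1) = 0" "kappa 1 = 1"
    by (auto simp: kappa_def)
  ultimately show ?thesis
    by simp
qed

lemma kappa_lipschitz: "1-lipschitz_on {-1..1} kappa"
  by (rule lipschitz_on_Icc_of_deriv_bound[OF _ continuous_on_kappa _ kappa_has_real_derivative])
     (use kappa_deriv_bounds in auto)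

lemma kappa_maps_Icc: "kappa ` {-1..1} \<subseteq> {-1..1}"
  using kappa_range by force

lemma kappa_iter_range: "c \<in> {-1..1} \<Longrightarrow> (kappa ^^ j) c \<in> {-1..1}"
  by (rule funpow_in_invariant[OF kappa_maps_Icc])

lemma kappa_iter_lipschitz: "1-lipschitz_on {-1..1} (kappa ^^ j)"
  using lipschitz_on_funpow[OF kappa_lipschitz kappa_maps_Icc, of j] by simp

definition kappa_iter_deriv :: "nat \<Rightarrow> real \<Rightarrow> real" where
  "kappa_iter_deriv d c = (\<Prod>j<d. kappa_deriv ((kappa ^^ j) c))"

lemma kappa_iter_has_real_derivative:
  "c \<in> {-1..1} \<Longrightarrow> ((kappa ^^ d) has_real_derivative kappa_iter_deriv d c) (at c within {-1..1})"
proof (induction d)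
  case 0
  then show ?case
    by (simp add: kappa_iter_deriv_def id_def DERIV_ident)
next
  case (Suc d)
  have "(kappa has_real_derivative kappa_deriv ((kappa ^^ d) c))
          (at ((kappa ^^ d) c) within (kappa ^^ d) ` {-1..1})"
    by (rule has_field_derivative_subset[OF kappa_has_real_derivative_within])
       (use kappa_iter_range[OF Suc.prems, of d] kappa_iter_range in auto)
  from DERIV_image_chain[OF this Suc.IH[OF Suc.prems]] show ?case
    by (simp add: kappa_iter_deriv_def mult.commute comp_def)
qed

lemma kappa_iter_deriv_bounds: "c \<in> {-1..1} \<Longrightarrow> 0 \<le> kappa_iter_deriv d c \<and> kappa_iter_deriv d c \<le> 1"
  unfolding kappa_iter_deriv_def using kappa_deriv_bounds kappa_iter_range
  by (auto intro!: prod_nonneg prod_le_1)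


section \<open>The angle map\<close>

lemma gmap_arccos: "c \<in> {-1..1} \<Longrightarrow> gmap (arccos c) = arccos (kappa c)"
  by (simp add: gmap_def kappa_def sin_arccos add.commute mult.commute)

lemma gmap_iter_arccos: "c \<in> {-1..1} \<Longrightarrow> (gmap ^^ j) (arccos c) = arccos ((kappa ^^ j) c)"
  by (induction j) (simp_all add: gmap_arccos[OF kappa_iter_range])

definition gmap_arg :: "real \<Rightarrow> real" where
  "gmap_arg t = ((pi - t) * cos t + sin t) / pi"

lemma gmap_eq_arccos_gmap_arg: "gmap t = arccos (gmap_arg t)"
  by (simp add: gmap_def gmap_arg_def)

lemma gmap_arg_eq_kappa_cos:
  assumes "t \<in> {0..pi}"
  shows "gmap_arg t = kappa (cos t)"
proof -
  have "sin t = sqrt (1 - (cos t)\<^sup>2)"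
    using sin_arccos[of "cos t"] arccos_cos[of t] assms by simp
  then show ?thesis
    using arccos_cos[of t] assms by (simp add: gmap_arg_def kappa_def)
qed

lemma gmap_arg_range: "t \<in> {0..pi} \<Longrightarrow> 0 \<le> gmap_arg t \<and> gmap_arg t \<le> 1"
  using gmap_arg_eq_kappa_cos kappa_range by simp

lemma continuous_on_gmap_arg: "continuous_on S gmap_arg"
  unfolding gmap_arg_def[abs_def] by (intro continuous_intros) auto

lemma gmap_arg_has_real_derivative:
  "(gmap_arg has_real_derivative - ((pi - t) * sin t) / pi) (at t)"
  unfolding gmap_arg_def[abs_def]
  by (auto intro!: derivative_eq_intros simp: field_simps)

lemma gmap_arg_strict_range:
  assumes "0 < t" "t < pi"
  shows "0 < gmap_arg t \<and> gmap_arg t < 1"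
proof -
  have neg: "\<exists>y. DERIV gmap_arg x :> y \<and> y < 0" if "0 < x" "x < pi" for x
    using gmap_arg_has_real_derivative[of x] that sin_gt_zero[of x] by force
  have "gmap_arg t < gmap_arg 0"
    by (rule DERIV_neg_imp_decreasing_open[OF assms(1) _ continuous_on_gmap_arg])
       (use neg assms in auto)
  moreover have "gmap_arg pi < gmap_arg t"
    by (rule DERIV_neg_imp_decreasing_open[OF assms(2) _ continuous_on_gmap_arg])
       (use neg assms in auto)
  moreover have "gmap_arg 0 = 1" "gmap_arg pi = 0"
    by (auto simp: gmap_arg_def)
  ultimately show ?thesis
    by linarith
qed

text \<open>This is the inequality \<open>\<bar>gmap'\<bar> \<le> 1\<close> in disguise, since
  \<open>gmap' t = (pi - t) sin t / (pi sqrt (1 - gmap_arg t\<^sup>2))\<close>.\<close>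
lemma sin_sq_add_gmap_arg_sq_le:
  assumes "t \<in> {0..pi}"
  shows "((pi - t) * sin t)\<^sup>2 + (pi * gmap_arg t)\<^sup>2 \<le> pi\<^sup>2"
proof -
  define h where "h t = ((pi - t) * sin t)\<^sup>2 + ((pi - t) * cos t + sin t)\<^sup>2" for t
  have h_deriv: "(h has_real_derivative - 4 * (pi - x) * (sin x)\<^sup>2) (at x)" for x
    unfolding h_def[abs_def]
    by (rule derivative_eq_intros refl | simp)+ (simp add: algebra_simps power2_eq_square)
  have "h t \<le> h 0"
  proof (rule DERIV_nonpos_imp_nonincreasing[of 0 t h])
    fix x assume "0 \<le> x" "x \<le> t"
    then have "0 \<le> (pi - x) * (sin x)\<^sup>2"
      using assms by auto
    then have "- 4 * (pi - x) * (sin x)\<^sup>2 \<le> 0"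
      by linarith
    then show "\<exists>y. DERIV h x :> y \<and> y \<le> 0"
      using h_deriv by blast
  qed (use assms in auto)
  moreover have "pi * gmap_arg t = (pi - t) * cos t + sin t"
    by (simp add: gmap_arg_def)
  ultimately show ?thesis
    by (simp add: h_def)
qed

lemma gmap_has_real_derivative_le_one:
  assumes "0 < t" "t < pi"
  shows "\<exists>D. (gmap has_real_derivative D) (at t) \<and> \<bar>D\<bar> \<le> 1"
proof -
  define q where "q = gmap_arg t"
  define s where "s = sqrt (1 - q\<^sup>2)"
  have q: "0 < q" "q < 1"
    using gmap_arg_strict_range[OF assms] by (auto simp: q_def)
  then have s: "s > 0" "s\<^sup>2 = 1 - q\<^sup>2"
    by (auto simp: s_def abs_square_less_1 power_le_one)
  have deriv: "(gmap has_real_derivative inverse (- s) * (- ((pi - t) * sin t) / pi)) (at t)"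
    unfolding gmap_eq_arccos_gmap_arg[abs_def] s_def q_def
    by (rule DERIV_chain2[OF DERIV_arccos gmap_arg_has_real_derivative])
       (use q in \<open>auto simp: q_def\<close>)
  have nonneg: "0 \<le> (pi - t) * sin t"
    using assms sin_ge_zero[of t] by auto
  have "(pi * s)\<^sup>2 = pi\<^sup>2 - (pi * q)\<^sup>2"
    using s(2) by (simp add: power_mult_distrib right_diff_distrib)
  then have "((pi - t) * sin t)\<^sup>2 \<le> (pi * s)\<^sup>2"
    using sin_sq_add_gmap_arg_sq_le[of t] assms by (simp add: q_def)
  then have "(pi - t) * sin t \<le> pi * s"
    by (rule power2_le_imp_le) (use s in simp)
  then have "\<bar>inverse (- s) * (- ((pi - t) * sin t) / pi)\<bar> \<le> 1"
    using nonneg s(1) by (simp add: abs_mult field_simps)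
  then show ?thesis
    using deriv by blast
qed

lemma continuous_on_gmap: "continuous_on {0..pi} gmap"
  unfolding gmap_eq_arccos_gmap_arg[abs_def]
proof (intro continuous_intros continuous_on_gmap_arg ballI)
  show "- 1 \<le> gmap_arg t \<and> gmap_arg t \<le> 1" if "t \<in> {0..pi}" for t
    using gmap_arg_range[OF that] by linarith
qed

lemma gmap_maps_Icc: "gmap ` {0..pi} \<subseteq> {0..pi}"
proof (clarsimp simp: gmap_eq_arccos_gmap_arg)
  fix t :: real assume "0 \<le> t" "t \<le> pi"
  then have "-1 \<le> gmap_arg t" "gmap_arg t \<le> 1"
    using gmap_arg_range[of t] by auto
  then show "0 \<le> arccos (gmap_arg t) \<and> arccos (gmap_arg t) \<le> pi"
    using arccos_lbound arccos_ubound by blast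
qed

lemma gmap_lipschitz: "1-lipschitz_on {0..pi} gmap"
proof -
  obtain D where D: "\<And>t. 0 < t \<Longrightarrow> t < pi \<Longrightarrow> (gmap has_real_derivative D t) (at t) \<and> \<bar>D t\<bar> \<le> 1"
    using gmap_has_real_derivative_le_one by metis
  show ?thesis
    by (rule lipschitz_on_Icc_of_deriv_bound[OF pi_gt_zero continuous_on_gmap, of 1 D])
       (use D in auto)
qed

lemma gmap_iter_lipschitz: "1-lipschitz_on {0..pi} (gmap ^^ j)"
  using lipschitz_on_funpow[OF gmap_lipschitz gmap_maps_Icc, of j] by simp


lemma kappa_iter_deriv_arccos:
  "c \<in> {-1..1} \<Longrightarrow> kappa_iter_deriv d c = (\<Prod>j<d. (pi - (gmap ^^ j) (arccos c)) / pi)"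
  unfolding kappa_iter_deriv_def kappa_deriv_def by (simp add: gmap_iter_arccos)

lemma kappa_iter_deriv_lipschitz_angle:
  assumes "c \<in> {-1..1}" "c' \<in> {-1..1}"
  shows "\<bar>kappa_iter_deriv d c - kappa_iter_deriv d c'\<bar> \<le> real d * \<bar>arccos c - arccos c'\<bar>"
proof -
  define z where "z \<theta> j = (pi - (gmap ^^ j) \<theta>) / pi" for \<theta> j
  have angles: "arccos c \<in> {0..pi}" "arccos c' \<in> {0..pi}"
    using assms arccos_lbound arccos_ubound by auto
  have z_range: "\<bar>z \<theta> j\<bar> \<le> 1" if "\<theta> \<in> {0..pi}" for \<theta> j
    using funpow_in_invariant[OF gmap_maps_Icc that, of j] by (auto simp: z_def field_simps)
  have z_lip: "\<bar>z (arccos c) j - z (arccos c') j\<bar> \<le> \<bar>arccos c - arccos c'\<bar>" for j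
  proof -
    have "\<bar>z (arccos c) j - z (arccos c') j\<bar> = \<bar>(gmap ^^ j) (arccos c) - (gmap ^^ j) (arccos c')\<bar> / pi"
      by (simp add: z_def diff_divide_distrib[symmetric] abs_minus_commute)
    also have "\<dots> \<le> \<bar>(gmap ^^ j) (arccos c) - (gmap ^^ j) (arccos c')\<bar>"
      using pi_gt3 by (simp add: divide_le_eq mult_le_cancel_left1)
    also have "\<dots> \<le> \<bar>arccos c - arccos c'\<bar>"
      using lipschitz_on_normD[OF gmap_iter_lipschitz angles] by simp
    finally show ?thesis .
  qed
  have "\<bar>(\<Prod>j<d. z (arccos c) j) - (\<Prod>j<d. z (arccos c') j)\<bar>
      \<le> (\<Sum>j<d. \<bar>z (arccos c) j - z (arccos c') j\<bar>)"
    using norm_prod_diff[of "{..<d}" "z (arccos c)" "z (arccos c')"] z_range angles by simp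
  also have "\<dots> \<le> real d * \<bar>arccos c - arccos c'\<bar>"
    using sum_bounded_above[of "{..<d}" _ "\<bar>arccos c - arccos c'\<bar>"] z_lip by simp
  finally show ?thesis
    using assms by (simp add: kappa_iter_deriv_arccos z_def)
qed


section \<open>Euclidean geometry of \<open>Rn n\<close>\<close>

lemma vnorm_eq_L2_set: "vnorm n x = L2_set x {..<n}"
  by (simp add: vnorm_def L2_set_def)

lemma vnorm_nonneg [simp]: "0 \<le> vnorm n x"
  by (simp add: vnorm_eq_L2_set)

lemma vnorm_power2: "(vnorm n x)\<^sup>2 = (\<Sum>i<n. (x i)\<^sup>2)"
  by (simp add: vnorm_def sum_nonneg)

lemma vnorm_scale: "vnorm n (\<lambda>i. c * x i) = \<bar>c\<bar> * vnorm n x"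
  by (simp add: vnorm_def power_mult_distrib sum_distrib_left[symmetric] real_sqrt_mult)

lemma vnorm_triangle: "vnorm n (vadd x y) \<le> vnorm n x + vnorm n y"
  unfolding vnorm_eq_L2_set vadd_def by (rule L2_set_triangle_ineq)

lemma vnorm_vsub_commute: "vnorm n (vsub x y) = vnorm n (vsub y x)"
  by (simp add: vnorm_def vsub_def power2_commute)

lemma vnorm_vsub_le: "vnorm n (vsub x y) \<le> vnorm n x + vnorm n y"
  using vnorm_triangle[of n x "\<lambda>i. - y i"] vnorm_scale[of n "-1" y]
  by (simp add: vadd_def vsub_def)

lemma abs_vnorm_diff_le: "\<bar>vnorm n x - vnorm n y\<bar> \<le> vnorm n (vsub x y)"
  using vnorm_triangle[of n "vsub x y" y] vnorm_triangle[of n "vsub y x" x] vnorm_vsub_commute[of n x y]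
  by (simp add: vadd_def vsub_def)

lemma abs_le_vnorm: "i < n \<Longrightarrow> \<bar>x i\<bar> \<le> vnorm n x"
  using member_le_L2_set[of "{..<n}" i "\<lambda>j. \<bar>x j\<bar>"] by (simp add: vnorm_def L2_set_def)

lemma vnorm_eq_0_coord: "vnorm n x = 0 \<Longrightarrow> i < n \<Longrightarrow> x i = 0"
  using abs_le_vnorm[of i n x] by simp

lemma abs_vinner_le: "\<bar>vinner n x y\<bar> \<le> vnorm n x * vnorm n y"
proof -
  have "\<bar>vinner n x y\<bar> \<le> (\<Sum>i<n. \<bar>x i\<bar> * \<bar>y i\<bar>)"
    unfolding vinner_def by (rule order_trans[OF sum_abs]) (simp add: abs_mult)
  also have "\<dots> \<le> vnorm n x * vnorm n y"
    unfolding vnorm_eq_L2_set by (rule L2_set_mult_ineq)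
  finally show ?thesis .
qed

lemma sum_lessThan_e1: "1 \<le> n \<Longrightarrow> (\<Sum>i<n. e1 i * f i) = f 0"
  by (simp add: e1_def sum.delta if_distrib[of "\<lambda>c. c * _"] cong: if_cong)

lemma vinner_e1: "1 \<le> n \<Longrightarrow> vinner n y e1 = y 0"
  using sum_lessThan_e1[of n y] by (simp add: vinner_def mult.commute)

lemma vnorm_e1: "1 \<le> n \<Longrightarrow> vnorm n e1 = 1"
  using sum_lessThan_e1[of n e1] by (simp add: vnorm_def power2_eq_square e1_def)

lemma vnorm_power2_split_first:
  "1 \<le> n \<Longrightarrow> (vnorm n x)\<^sup>2 = (x 0)\<^sup>2 + (L2_set x {1..<n})\<^sup>2"
proof -
  assume "1 \<le> n"
  then have "{..<n} = insert 0 {1..<n}"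
    by auto
  then show ?thesis
    by (simp add: vnorm_power2 L2_set_def sum_nonneg)
qed

text \<open>Two points of the unit sphere whose first coordinates are \<open>cos \<theta>\<close> and \<open>cos \<phi>\<close> are at
  least as far apart as the points \<open>(cos \<theta>, sin \<theta>)\<close> and \<open>(cos \<phi>, sin \<phi>)\<close> of the circle,
  and a chord of the circle is at least a third of its arc.\<close>
lemma arccos_first_coord_lipschitz:
  assumes n: "1 \<le> n" and u: "vnorm n u = 1" and w: "vnorm n w = 1"
  shows "\<bar>arccos (u 0) - arccos (w 0)\<bar> \<le> 3 * vnorm n (vsub u w)"
proof -
  define \<theta> where "\<theta> = arccos (u 0)"
  define \<phi> where "\<phi> = arccos (w 0)"
  define A where "A = {1..<n::nat}"
  have coords: "\<bar>u 0\<bar> \<le> 1" "\<bar>w 0\<bar> \<le> 1"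
    using abs_le_vnorm[of 0 n u] abs_le_vnorm[of 0 n w] n u w by auto
  have tail: "L2_set v A = sin (arccos (v 0))" if "vnorm n v = 1" "\<bar>v 0\<bar> \<le> 1" for v
  proof -
    have "(L2_set v A)\<^sup>2 = 1 - (v 0)\<^sup>2"
      using vnorm_power2_split_first[OF n, of v] that by (simp add: A_def)
    then have "L2_set v A = sqrt (1 - (v 0)\<^sup>2)"
      by (metis L2_set_nonneg real_sqrt_unique)
    then show ?thesis
      using that by (simp add: sin_arccos abs_le_iff)
  qed
  have "\<bar>L2_set u A - L2_set w A\<bar> \<le> L2_set (vsub u w) A"
    using L2_set_triangle_ineq[of "vsub u w" w A] L2_set_triangle_ineq[of "vsub w u" u A]
      L2_set_def[of "vsub u w"] L2_set_def[of "vsub w u"]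
    by (simp add: vsub_def power2_commute)
  then have "(sin \<theta> - sin \<phi>)\<^sup>2 \<le> (L2_set (vsub u w) A)\<^sup>2"
    using tail[OF u coords(1)] tail[OF w coords(2)]
    by (simp add: \<theta>_def \<phi>_def power2_le_iff_abs_le)
  moreover have "cos \<theta> - cos \<phi> = vsub u w 0"
    using coords by (simp add: \<theta>_def \<phi>_def vsub_def abs_le_iff)
  ultimately have "(cos \<theta> - cos \<phi>)\<^sup>2 + (sin \<theta> - sin \<phi>)\<^sup>2 \<le> (vnorm n (vsub u w))\<^sup>2"
    using vnorm_power2_split_first[OF n, of "vsub u w"] by (simp add: A_def)
  moreover have "(cos \<theta> - cos \<phi>)\<^sup>2 + (sin \<theta> - sin \<phi>)\<^sup>2 = 2 - 2 * cos (\<theta> - \<phi>)"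
    using sin_cos_squared_add[of \<theta>] sin_cos_squared_add[of \<phi>]
    by (simp add: cos_diff power2_eq_square algebra_simps)
  moreover have "\<bar>\<theta> - \<phi>\<bar> \<le> pi"
    using coords arccos_bounded[of "u 0"] arccos_bounded[of "w 0"]
    by (auto simp: \<theta>_def \<phi>_def abs_le_iff)
  ultimately have "(\<theta> - \<phi>)\<^sup>2 \<le> (3 * vnorm n (vsub u w))\<^sup>2"
    using sq_le_nine_chord_sq[of "\<theta> - \<phi>"] by (simp add: power_mult_distrib)
  then have "\<bar>\<theta> - \<phi>\<bar> \<le> \<bar>3 * vnorm n (vsub u w)\<bar>"
    by (simp only: abs_le_square_iff)
  then show ?thesis
    by (simp add: \<theta>_def \<phi>_def)
qed

text \<open>At the origin \<open>y i / 0 = 0\<close> makes this the zero vector, which matches \<open>vangle\<close> there;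
  this is why \<open>loss_eq\<close> below needs no hypothesis \<open>y \<noteq> 0\<close>.\<close>
definition vunit :: "nat \<Rightarrow> (nat \<Rightarrow> real) \<Rightarrow> (nat \<Rightarrow> real)" where
  "vunit n y = (\<lambda>i. y i / vnorm n y)"

lemma vnorm_vunit: "0 < vnorm n y \<Longrightarrow> vnorm n (vunit n y) = 1"
  using vnorm_scale[of n "inverse (vnorm n y)" y]
  by (simp add: vunit_def divide_inverse mult.commute)

lemma vunit_first_coord_range: "1 \<le> n \<Longrightarrow> vunit n y 0 \<in> {-1..1}"
  using abs_le_vnorm[of 0 n y]
  by (cases "vnorm n y = 0") (auto simp: vunit_def abs_le_iff divide_le_eq_1 le_divide_eq)

lemma vunit_lipschitz:
  assumes x: "0 < vnorm n x" and y: "0 < vnorm n y"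
  shows "vnorm n (vsub (vunit n y) (vunit n x)) \<le> 2 * vnorm n (vsub y x) / vnorm n x"
proof -
  define D where "D = vnorm n (vsub y x)"
  have "vsub (vunit n y) (vunit n x)
      = vadd (\<lambda>i. inverse (vnorm n x) * vsub y x i) (\<lambda>i. (inverse (vnorm n y) - inverse (vnorm n x)) * y i)"
    by (rule ext) (simp add: vunit_def vsub_def vadd_def divide_inverse algebra_simps)
  then have "vnorm n (vsub (vunit n y) (vunit n x))
      \<le> vnorm n (\<lambda>i. inverse (vnorm n x) * vsub y x i)
        + vnorm n (\<lambda>i. (inverse (vnorm n y) - inverse (vnorm n x)) * y i)"
    by (simp only: vnorm_triangle)
  also have "\<dots> = inverse (vnorm n x) * D + \<bar>inverse (vnorm n y) - inverse (vnorm n x)\<bar> * vnorm n y"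
    using x by (simp only: vnorm_scale D_def) simp
  also have "\<bar>inverse (vnorm n y) - inverse (vnorm n x)\<bar> * vnorm n y = \<bar>vnorm n x - vnorm n y\<bar> / vnorm n x"
    using x y by (simp add: field_simps abs_divide abs_mult)
  also have "\<dots> \<le> D / vnorm n x"
    using abs_vnorm_diff_le[of n y x] x by (simp add: D_def abs_minus_commute divide_right_mono)
  finally show ?thesis
    by (simp add: D_def divide_inverse mult_ac)
qed


section \<open>Gradients\<close>

lemma Rn_vadd: "x \<in> Rn n \<Longrightarrow> h \<in> Rn n \<Longrightarrow> vadd x h \<in> Rn n"
  by (simp add: Rn_def vadd_def)

lemma has_grad_in_Rn: "has_grad n f G x \<Longrightarrow> G \<in> Rn n"
  by (simp add: has_grad_def)

lemma has_grad_transform: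
  assumes "has_grad n f G x" "\<And>y. f y = g y" "\<And>i. G i = G' i"
  shows "has_grad n g G' x"
proof -
  have "f = g" "G = G'"
    using assms(2,3) by auto
  then show ?thesis
    using assms(1) by simp
qed

lemma has_grad_const: "has_grad n (\<lambda>_. c) (\<lambda>_. 0) x"
  by (auto simp: has_grad_def Rn_def vinner_def)

lemma has_grad_first_coord:
  assumes "1 \<le> n"
  shows "has_grad n (\<lambda>y. y 0) e1 x"
proof -
  have "vinner n e1 h = h 0" for h
    using sum_lessThan_e1[OF assms] by (simp add: vinner_def)
  moreover have "e1 \<in> Rn n"
    using assms by (simp add: Rn_def e1_def)
  ultimately show ?thesis
    unfolding has_grad_def by (simp add: vadd_def)
qed

lemma has_grad_sum_squares:
  assumes "x \<in> Rn n"
  shows "has_grad n (\<lambda>y. (vnorm n y)\<^sup>2) (\<lambda>i. 2 * x i) x"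
  unfolding has_grad_def
proof (intro conjI allI impI)
  show "(\<lambda>i. 2 * x i) \<in> Rn n"
    using assms by (simp add: Rn_def)
  fix e :: real assume "0 < e"
  have remainder: "(vnorm n (vadd x h))\<^sup>2 - (vnorm n x)\<^sup>2 - vinner n (\<lambda>i. 2 * x i) h = (vnorm n h)\<^sup>2" for h
    unfolding vnorm_power2 vinner_def vadd_def sum_subtractf[symmetric]
    by (intro sum.cong) (auto simp: power2_eq_square algebra_simps)
  show "\<exists>\<delta>>0. \<forall>h\<in>Rn n. vnorm n h < \<delta> \<longrightarrow>
      \<bar>(vnorm n (vadd x h))\<^sup>2 - (vnorm n x)\<^sup>2 - vinner n (\<lambda>i. 2 * x i) h\<bar> \<le> e * vnorm n h"
  proof (intro exI[of _ e] conjI ballI impI)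
    fix h assume "vnorm n h < e"
    then show "\<bar>(vnorm n (vadd x h))\<^sup>2 - (vnorm n x)\<^sup>2 - vinner n (\<lambda>i. 2 * x i) h\<bar> \<le> e * vnorm n h"
      unfolding remainder by (simp add: power2_eq_square mult_right_mono)
  qed (rule \<open>0 < e\<close>)
qed

lemma has_grad_add:
  assumes f: "has_grad n f G x" and g: "has_grad n g H x"
  shows "has_grad n (\<lambda>y. f y + g y) (\<lambda>i. G i + H i) x"
  unfolding has_grad_def
proof (intro conjI allI impI)
  show "(\<lambda>i. G i + H i) \<in> Rn n"
    using f g by (simp add: has_grad_def Rn_def)
  fix e :: real assume "0 < e"
  then have "e / 2 > 0"
    by simp
  then obtain d1 d2 where "d1 > 0" "d2 > 0"
    and d1: "\<forall>h\<in>Rn n. vnorm n h < d1 \<longrightarrow> \<bar>f (vadd x h) - f x - vinner n G h\<bar> \<le> e/2 * vnorm n h"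
    and d2: "\<forall>h\<in>Rn n. vnorm n h < d2 \<longrightarrow> \<bar>g (vadd x h) - g x - vinner n H h\<bar> \<le> e/2 * vnorm n h"
    using f g unfolding has_grad_def by blast
  show "\<exists>\<delta>>0. \<forall>h\<in>Rn n. vnorm n h < \<delta> \<longrightarrow>
      \<bar>f (vadd x h) + g (vadd x h) - (f x + g x) - vinner n (\<lambda>i. G i + H i) h\<bar> \<le> e * vnorm n h"
  proof (intro exI[of _ "min d1 d2"] conjI ballI impI)
    fix h assume h: "h \<in> Rn n" "vnorm n h < min d1 d2"
    have "vinner n (\<lambda>i. G i + H i) h = vinner n G h + vinner n H h"
      by (simp add: vinner_def sum.distrib distrib_right)
    then have "\<bar>f (vadd x h) + g (vadd x h) - (f x + g x) - vinner n (\<lambda>i. G i + H i) h\<bar>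
        \<le> \<bar>f (vadd x h) - f x - vinner n G h\<bar> + \<bar>g (vadd x h) - g x - vinner n H h\<bar>"
      by linarith
    also have "\<dots> \<le> e/2 * vnorm n h + e/2 * vnorm n h"
      using d1 d2 h by (intro add_mono) auto
    finally show "\<bar>f (vadd x h) + g (vadd x h) - (f x + g x) - vinner n (\<lambda>i. G i + H i) h\<bar> \<le> e * vnorm n h"
      by simp
  qed (use \<open>d1 > 0\<close> \<open>d2 > 0\<close> in auto)
qed

lemma has_grad_local_bound:
  assumes "has_grad n f G x"
  obtains \<delta> where "\<delta> > 0"
    "\<And>h. h \<in> Rn n \<Longrightarrow> vnorm n h < \<delta> \<Longrightarrow> \<bar>f (vadd x h) - f x\<bar> \<le> (vnorm n G + 1) * vnorm n h"
proof -
  obtain \<delta> where "\<delta> > 0"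
    and \<delta>: "\<forall>h\<in>Rn n. vnorm n h < \<delta> \<longrightarrow> \<bar>f (vadd x h) - f x - vinner n G h\<bar> \<le> 1 * vnorm n h"
    using assms unfolding has_grad_def by (meson zero_less_one)
  have "\<bar>f (vadd x h) - f x\<bar> \<le> (vnorm n G + 1) * vnorm n h" if "h \<in> Rn n" "vnorm n h < \<delta>" for h
    using \<delta> that abs_vinner_le[of n G h] by (auto simp: algebra_simps abs_le_iff)
  with \<open>\<delta> > 0\<close> show ?thesis
    using that by blast
qed

lemma has_grad_outer_remainder:
  assumes \<phi>: "(\<phi> has_real_derivative D) (at (f x) within S)"
    and fS: "\<And>y. y \<in> Rn n \<Longrightarrow> f y \<in> S" and x: "x \<in> Rn n" and f: "has_grad n f G x"
    and e: "0 < e"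
  obtains \<delta> where "\<delta> > 0" "\<And>h. h \<in> Rn n \<Longrightarrow> vnorm n h < \<delta> \<Longrightarrow>
    \<bar>\<phi> (f (vadd x h)) - \<phi> (f x) - D * (f (vadd x h) - f x)\<bar> \<le> e * vnorm n h"
proof -
  define M where "M = vnorm n G + 1"
  have M: "M > 0"
    by (simp add: M_def add_nonneg_pos)
  obtain d where "d > 0"
    and d: "\<And>h. h \<in> Rn n \<Longrightarrow> vnorm n h < d \<Longrightarrow> \<bar>f (vadd x h) - f x\<bar> \<le> M * vnorm n h"
    using has_grad_local_bound[OF f] unfolding M_def by blast
  obtain \<rho> where "\<rho> > 0"
    and \<rho>: "\<And>z. z \<in> S \<Longrightarrow> \<bar>z - f x\<bar> < \<rho> \<Longrightarrow>
                 \<bar>\<phi> z - \<phi> (f x) - D * (z - f x)\<bar> \<le> e / M * \<bar>z - f x\<bar>"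
    using has_real_derivative_remainder_le[OF \<phi>, of "e / M"] e M by auto
  have "\<bar>\<phi> (f (vadd x h)) - \<phi> (f x) - D * (f (vadd x h) - f x)\<bar> \<le> e * vnorm n h"
    if h: "h \<in> Rn n" "vnorm n h < min d (\<rho> / M)" for h
  proof -
    have close: "\<bar>f (vadd x h) - f x\<bar> \<le> M * vnorm n h"
      using d h by auto
    also have "\<dots> < \<rho>"
      using h M by (simp add: less_divide_eq mult.commute)
    finally have "\<bar>\<phi> (f (vadd x h)) - \<phi> (f x) - D * (f (vadd x h) - f x)\<bar>
        \<le> e / M * \<bar>f (vadd x h) - f x\<bar>"
      using \<rho> fS[OF Rn_vadd[OF x h(1)]] by auto
    also have "\<dots> \<le> e / M * (M * vnorm n h)"
      using close e M by (intro mult_left_mono) auto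
    finally show ?thesis
      using M by simp
  qed
  moreover have "min d (\<rho> / M) > 0"
    using \<open>d > 0\<close> \<open>\<rho> > 0\<close> M by simp
  ultimately show ?thesis
    using that by blast
qed

lemma has_grad_chain:
  assumes \<phi>: "(\<phi> has_real_derivative D) (at (f x) within S)"
    and fS: "\<And>y. y \<in> Rn n \<Longrightarrow> f y \<in> S" and x: "x \<in> Rn n" and f: "has_grad n f G x"
  shows "has_grad n (\<lambda>y. \<phi> (f y)) (\<lambda>i. D * G i) x"
  unfolding has_grad_def
proof (intro conjI allI impI)
  show "(\<lambda>i. D * G i) \<in> Rn n"
    using f by (simp add: has_grad_def Rn_def)
  fix e :: real assume e: "0 < e"
  obtain d1 where "d1 > 0" and outer: "\<And>h. h \<in> Rn n \<Longrightarrow> vnorm n h < d1 \<Longrightarrow>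
      \<bar>\<phi> (f (vadd x h)) - \<phi> (f x) - D * (f (vadd x h) - f x)\<bar> \<le> e / 2 * vnorm n h"
    using has_grad_outer_remainder[OF \<phi> fS x f, of "e / 2"] e by auto
  have "e / (2 * (\<bar>D\<bar> + 1)) > 0"
    using e by (simp add: add_nonneg_pos)
  then obtain d2 where "d2 > 0"
    and d2: "\<forall>h\<in>Rn n. vnorm n h < d2 \<longrightarrow>
               \<bar>f (vadd x h) - f x - vinner n G h\<bar> \<le> e / (2 * (\<bar>D\<bar> + 1)) * vnorm n h"
    using f unfolding has_grad_def by blast
  show "\<exists>\<delta>>0. \<forall>h\<in>Rn n. vnorm n h < \<delta> \<longrightarrow>
        \<bar>\<phi> (f (vadd x h)) - \<phi> (f x) - vinner n (\<lambda>i. D * G i) h\<bar> \<le> e * vnorm n h"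
  proof (intro exI[of _ "min d1 d2"] conjI ballI impI)
    fix h assume h: "h \<in> Rn n" "vnorm n h < min d1 d2"
    define z where "z = f (vadd x h)"
    have "\<bar>D\<bar> * \<bar>z - f x - vinner n G h\<bar> \<le> (\<bar>D\<bar> + 1) * (e / (2 * (\<bar>D\<bar> + 1)) * vnorm n h)"
      using d2 h e unfolding z_def by (intro mult_mono) auto
    also have "\<dots> = e / 2 * vnorm n h"
      by (simp add: field_simps add_nonneg_pos)
    finally have inner: "\<bar>D\<bar> * \<bar>z - f x - vinner n G h\<bar> \<le> e / 2 * vnorm n h" .
    have "\<phi> z - \<phi> (f x) - vinner n (\<lambda>i. D * G i) h
        = (\<phi> z - \<phi> (f x) - D * (z - f x)) + D * (z - f x - vinner n G h)"
      by (simp add: vinner_def sum_distrib_left algebra_simps mult.assoc)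
    then have "\<bar>\<phi> z - \<phi> (f x) - vinner n (\<lambda>i. D * G i) h\<bar>
        \<le> \<bar>\<phi> z - \<phi> (f x) - D * (z - f x)\<bar> + \<bar>D\<bar> * \<bar>z - f x - vinner n G h\<bar>"
      by (metis abs_mult abs_triangle_ineq)
    then show "\<bar>\<phi> (f (vadd x h)) - \<phi> (f x) - vinner n (\<lambda>i. D * G i) h\<bar> \<le> e * vnorm n h"
      using outer[OF h(1)] h inner unfolding z_def by auto
  qed (use \<open>d1 > 0\<close> \<open>d2 > 0\<close> in auto)
qed

lemma has_grad_cmult:
  "x \<in> Rn n \<Longrightarrow> has_grad n f G x \<Longrightarrow> has_grad n (\<lambda>y. c * f y) (\<lambda>i. c * G i) x"
  using has_grad_chain[of "\<lambda>t. c * t" c f x UNIV n G] by (auto intro!: derivative_eq_intros)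

lemma has_grad_diff:
  assumes "x \<in> Rn n" "has_grad n f G x" "has_grad n g H x"
  shows "has_grad n (\<lambda>y. f y - g y) (\<lambda>i. G i - H i) x"
  using has_grad_add[OF assms(2) has_grad_cmult[OF assms(1,3), of "-1"]] by simp

text \<open>By polarization, \<open>f g = ((f + g)\<^sup>2 - (f - g)\<^sup>2) / 4\<close>.\<close>
lemma has_grad_mult:
  assumes x: "x \<in> Rn n" and f: "has_grad n f G x" and g: "has_grad n g H x"
  shows "has_grad n (\<lambda>y. f y * g y) (\<lambda>i. f x * H i + g x * G i) x"
proof -
  have sq: "((\<lambda>t. t\<^sup>2) has_real_derivative 2 * z) (at z within UNIV)" for z :: real
    by (auto intro!: derivative_eq_intros)
  have "has_grad n (\<lambda>y. (f y + g y)\<^sup>2) (\<lambda>i. 2 * (f x + g x) * (G i + H i)) x"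
    using has_grad_chain[OF sq _ x has_grad_add[OF f g]] by simp
  moreover have "has_grad n (\<lambda>y. (f y - g y)\<^sup>2) (\<lambda>i. 2 * (f x - g x) * (G i - H i)) x"
    using has_grad_chain[OF sq _ x has_grad_diff[OF x f g]] by simp
  ultimately have "has_grad n (\<lambda>y. 1/4 * ((f y + g y)\<^sup>2 - (f y - g y)\<^sup>2))
      (\<lambda>i. 1/4 * (2 * (f x + g x) * (G i + H i) - 2 * (f x - g x) * (G i - H i))) x"
    by (intro has_grad_cmult[OF x] has_grad_diff[OF x])
  then show ?thesis
    by (rule has_grad_transform) (auto simp: power2_eq_square algebra_simps)
qed

lemma has_grad_unique:
  assumes f1: "has_grad n f G x" and f2: "has_grad n f G' x"
  shows "G = G'"
proof -
  define w where "w = vsub G G'"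
  have "vnorm n w = 0"
  proof (rule ccontr)
    assume "vnorm n w \<noteq> 0"
    then have w_pos: "vnorm n w > 0"
      using vnorm_nonneg[of n w] by linarith
    define e where "e = vnorm n w / 4"
    have "e > 0"
      using w_pos by (simp add: e_def)
    then obtain d1 d2 where "d1 > 0" "d2 > 0"
      and d1: "\<forall>h\<in>Rn n. vnorm n h < d1 \<longrightarrow> \<bar>f (vadd x h) - f x - vinner n G h\<bar> \<le> e * vnorm n h"
      and d2: "\<forall>h\<in>Rn n. vnorm n h < d2 \<longrightarrow> \<bar>f (vadd x h) - f x - vinner n G' h\<bar> \<le> e * vnorm n h"
      using f1 f2 unfolding has_grad_def by blast
    define t where "t = min d1 d2 / (2 * vnorm n w)"
    have t: "t > 0"
      using \<open>d1 > 0\<close> \<open>d2 > 0\<close> w_pos by (simp add: t_def)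
    define h where "h = (\<lambda>i. t * w i)"
    have h_norm: "vnorm n h = t * vnorm n w"
      unfolding h_def vnorm_scale using t by simp
    have "t * vnorm n w = min d1 d2 / 2"
      using w_pos by (simp add: t_def)
    then have "h \<in> Rn n" "vnorm n h < d1" "vnorm n h < d2"
      using h_norm \<open>d1 > 0\<close> \<open>d2 > 0\<close> has_grad_in_Rn[OF f1] has_grad_in_Rn[OF f2]
      by (auto simp: h_def w_def vsub_def Rn_def)
    then have "\<bar>vinner n G h - vinner n G' h\<bar> \<le> 2 * e * vnorm n h"
      using d1 d2 by fastforce
    moreover have "vinner n G h - vinner n G' h = t * (vnorm n w)\<^sup>2"
      unfolding vinner_def h_def vnorm_power2 sum_subtractf[symmetric] sum_distrib_left w_def vsub_def
      by (intro sum.cong) (auto simp: power2_eq_square algebra_simps)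
    ultimately have "t * (vnorm n w)\<^sup>2 \<le> (t * (vnorm n w)\<^sup>2) / 2"
      using t unfolding e_def h_norm by (simp add: power2_eq_square)
    then show False
      using t w_pos by simp
  qed
  then have "G i = G' i" if "i < n" for i
    using vnorm_eq_0_coord[of n w i] that by (simp add: w_def vsub_def)
  moreover have "G i = G' i" if "n \<le> i" for i
    using has_grad_in_Rn[OF f1] has_grad_in_Rn[OF f2] that by (simp add: Rn_def)
  ultimately show ?thesis
    by (metis ext not_le)
qed


section \<open>The loss and its gradient\<close>

lemma loss_eq:
  assumes "1 \<le> n"
  shows "loss d n y = (vnorm n y)\<^sup>2 / 2 - vnorm n y * (kappa ^^ d) (vunit n y 0) + 1/2"
proof -
  have c: "vunit n y 0 \<in> {-1..1}"
    by (rule vunit_first_coord_range[OF assms])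
  have "vangle n y = arccos (vunit n y 0)"
    by (simp add: vangle_def vinner_e1[OF assms] vunit_def)
  moreover have "cos (arccos ((kappa ^^ d) (vunit n y 0))) = (kappa ^^ d) (vunit n y 0)"
    using kappa_iter_range[OF c, of d] by simp
  ultimately show ?thesis
    by (simp add: loss_def gmap_iter_arccos[OF c])
qed

lemma has_grad_vnorm:
  assumes y: "y \<in> Rn n" and pos: "0 < vnorm n y"
  shows "has_grad n (vnorm n) (vunit n y) y"
proof -
  have "(sqrt has_real_derivative inverse (sqrt ((vnorm n y)\<^sup>2)) / 2) (at ((vnorm n y)\<^sup>2))"
    using pos by (intro DERIV_real_sqrt) simp
  from has_grad_chain[OF this _ y has_grad_sum_squares[OF y]]
  have "has_grad n (\<lambda>z. sqrt ((vnorm n z)\<^sup>2)) (\<lambda>i. inverse (sqrt ((vnorm n y)\<^sup>2)) / 2 * (2 * y i)) y"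
    by simp
  then show ?thesis
    by (rule has_grad_transform) (simp_all add: vunit_def field_simps)
qed

lemma has_grad_vunit_first_coord:
  assumes n: "1 \<le> n" and y: "y \<in> Rn n" and pos: "0 < vnorm n y"
  shows "has_grad n (\<lambda>z. vunit n z 0) (\<lambda>i. (e1 i - vunit n y 0 * vunit n y i) / vnorm n y) y"
proof -
  have "(inverse has_real_derivative - (inverse (vnorm n y) ^ 2)) (at (vnorm n y))"
    using DERIV_inverse[of "vnorm n y" UNIV] pos by (simp add: numeral_2_eq_2)
  from has_grad_chain[OF this _ y has_grad_vnorm[OF y pos]]
  have "has_grad n (\<lambda>z. inverse (vnorm n z)) (\<lambda>i. - (inverse (vnorm n y) ^ 2) * vunit n y i) y"
    by simp
  from has_grad_mult[OF y has_grad_first_coord[OF n] this]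
  show ?thesis
    by (rule has_grad_transform) (use pos in \<open>simp_all add: vunit_def field_simps power2_eq_square\<close>)
qed

definition radial_coeff :: "nat \<Rightarrow> real \<Rightarrow> real" where
  "radial_coeff d c = (kappa ^^ d) c - c * kappa_iter_deriv d c"

definition loss_grad :: "nat \<Rightarrow> nat \<Rightarrow> (nat \<Rightarrow> real) \<Rightarrow> (nat \<Rightarrow> real)" where
  "loss_grad d n y = (\<lambda>i. y i - radial_coeff d (vunit n y 0) * vunit n y i
                           - kappa_iter_deriv d (vunit n y 0) * e1 i)"

lemma has_grad_loss:
  assumes n: "1 \<le> n" and y: "y \<in> Rn n" and pos: "0 < vnorm n y"
  shows "has_grad n (loss d n) (loss_grad d n y) y"
proof -
  define c where "c = vunit n y 0"
  define F where "F = kappa_iter_deriv d c"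
  have "has_grad n (\<lambda>z. (kappa ^^ d) (vunit n z 0)) (\<lambda>i. F * ((e1 i - c * vunit n y i) / vnorm n y)) y"
    unfolding F_def c_def
    by (rule has_grad_chain[OF kappa_iter_has_real_derivative _ y has_grad_vunit_first_coord[OF n y pos]])
       (use vunit_first_coord_range[OF n] in auto)
  from has_grad_mult[OF y has_grad_vnorm[OF y pos] this]
  have "has_grad n (\<lambda>z. vnorm n z * (kappa ^^ d) (vunit n z 0))
      (\<lambda>i. F * (e1 i - c * vunit n y i) + (kappa ^^ d) c * vunit n y i) y"
    by (rule has_grad_transform) (use pos in \<open>simp_all add: c_def\<close>)
  from has_grad_add[OF has_grad_diff[OF y has_grad_cmult[OF y has_grad_sum_squares[OF y], of "1/2"] this]
      has_grad_const[of n "1/2"]]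
  show ?thesis
    by (rule has_grad_transform)
       (simp_all add: loss_eq[OF n] loss_grad_def radial_coeff_def F_def c_def algebra_simps)
qed


section \<open>Lipschitz bounds\<close>

lemma abs_radial_coeff_le:
  assumes "c \<in> {-1..1}"
  shows "\<bar>radial_coeff d c\<bar> \<le> 2"
proof -
  have "\<bar>(kappa ^^ d) c\<bar> \<le> 1"
    using kappa_iter_range[OF assms, of d] by auto
  moreover have "\<bar>c * kappa_iter_deriv d c\<bar> \<le> 1"
    unfolding abs_mult using kappa_iter_deriv_bounds[OF assms, of d] assms
    by (intro mult_le_one) auto
  ultimately show ?thesis
    unfolding radial_coeff_def by linarith
qed


lemma first_coord_range_sphere:
  "1 \<le> n \<Longrightarrow> vnorm n u = 1 \<Longrightarrow> u 0 \<in> {-1..1}"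
  using abs_le_vnorm[of 0 n u] by auto

lemma kappa_iter_deriv_lipschitz_sphere:
  assumes n: "1 \<le> n" and u: "vnorm n u = 1" and w: "vnorm n w = 1"
  shows "\<bar>kappa_iter_deriv d (u 0) - kappa_iter_deriv d (w 0)\<bar> \<le> 3 * real d * vnorm n (vsub u w)"
proof -
  have "\<bar>kappa_iter_deriv d (u 0) - kappa_iter_deriv d (w 0)\<bar> \<le> real d * \<bar>arccos (u 0) - arccos (w 0)\<bar>"
    using first_coord_range_sphere[OF n u] first_coord_range_sphere[OF n w]
    by (rule kappa_iter_deriv_lipschitz_angle)
  also have "\<dots> \<le> real d * (3 * vnorm n (vsub u w))"
    by (intro mult_left_mono arccos_first_coord_lipschitz[OF n u w]) simp
  finally show ?thesis
    by simp
qed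

lemma radial_coeff_lipschitz_sphere:
  assumes n: "1 \<le> n" and u: "vnorm n u = 1" and w: "vnorm n w = 1"
  shows "\<bar>radial_coeff d (u 0) - radial_coeff d (w 0)\<bar> \<le> (2 + 3 * real d) * vnorm n (vsub u w)"
proof -
  define D where "D = vnorm n (vsub u w)"
  define Fu Fw where "Fu = kappa_iter_deriv d (u 0)" and "Fw = kappa_iter_deriv d (w 0)"
  have range: "u 0 \<in> {-1..1}" "w 0 \<in> {-1..1}"
    using first_coord_range_sphere n u w by auto
  have coord: "\<bar>u 0 - w 0\<bar> \<le> D"
    using abs_le_vnorm[of 0 n "vsub u w"] n by (simp add: D_def vsub_def)
  have "\<bar>(kappa ^^ d) (u 0) - (kappa ^^ d) (w 0)\<bar> \<le> \<bar>u 0 - w 0\<bar>"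
    using lipschitz_on_normD[OF kappa_iter_lipschitz range] by simp
  moreover have "\<bar>u 0 * Fu - w 0 * Fw\<bar> \<le> D + 3 * real d * D"
  proof -
    have "u 0 * Fu - w 0 * Fw = (u 0 - w 0) * Fu + w 0 * (Fu - Fw)"
      by (simp add: algebra_simps)
    then have "\<bar>u 0 * Fu - w 0 * Fw\<bar> \<le> \<bar>u 0 - w 0\<bar> * \<bar>Fu\<bar> + \<bar>w 0\<bar> * \<bar>Fu - Fw\<bar>"
      by (metis abs_mult abs_triangle_ineq)
    also have "\<dots> \<le> D * 1 + 1 * (3 * real d * D)"
      using coord range kappa_iter_deriv_bounds[OF range(1), of d]
        kappa_iter_deriv_lipschitz_sphere[OF n u w, of d]
      by (intro add_mono mult_mono) (auto simp: Fu_def Fw_def D_def)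
    finally show ?thesis
      by simp
  qed
  moreover have "radial_coeff d (u 0) - radial_coeff d (w 0)
      = ((kappa ^^ d) (u 0) - (kappa ^^ d) (w 0)) - (u 0 * Fu - w 0 * Fw)"
    by (simp add: radial_coeff_def Fu_def Fw_def)
  ultimately have "\<bar>radial_coeff d (u 0) - radial_coeff d (w 0)\<bar> \<le> D + (D + 3 * real d * D)"
    using coord by (smt (verit, best) abs_triangle_ineq4)
  then show ?thesis
    by (simp add: D_def algebra_simps)
qed


lemma vnorm_loss_grad_diff_le:
  fixes x y :: "nat \<Rightarrow> real"
  assumes n: "1 \<le> n" and y: "0 < vnorm n y"
  defines "u \<equiv> vunit n y" and "v \<equiv> vunit n x"
  shows "vnorm n (vsub (loss_grad d n y) (loss_grad d n x))
           \<le> vnorm n (vsub y x) + \<bar>radial_coeff d (u 0) - radial_coeff d (v 0)\<bar>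
             + \<bar>radial_coeff d (v 0)\<bar> * vnorm n (vsub u v)
             + \<bar>kappa_iter_deriv d (u 0) - kappa_iter_deriv d (v 0)\<bar>"
    (is "_ \<le> _ + \<bar>?Pu - ?Pv\<bar> + _ + \<bar>?Fu - ?Fv\<bar>")
proof -
  define B where "B = vadd (\<lambda>i. (?Pu - ?Pv) * u i) (\<lambda>i. ?Pv * vsub u v i)"
  have "vsub (loss_grad d n y) (loss_grad d n x) = vsub (vsub (vsub y x) B) (\<lambda>i. (?Fu - ?Fv) * e1 i)"
    by (rule ext) (simp add: loss_grad_def vsub_def vadd_def B_def u_def v_def algebra_simps)
  then have "vnorm n (vsub (loss_grad d n y) (loss_grad d n x))
      \<le> vnorm n (vsub (vsub y x) B) + vnorm n (\<lambda>i. (?Fu - ?Fv) * e1 i)"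
    by (simp only: vnorm_vsub_le)
  also have "\<dots> \<le> vnorm n (vsub y x) + vnorm n B + \<bar>?Fu - ?Fv\<bar>"
    using vnorm_vsub_le[of n "vsub y x" B] by (simp add: vnorm_scale vnorm_e1[OF n])
  also have "vnorm n B \<le> \<bar>?Pu - ?Pv\<bar> + \<bar>?Pv\<bar> * vnorm n (vsub u v)"
    using vnorm_triangle[of n "\<lambda>i. (?Pu - ?Pv) * u i" "\<lambda>i. ?Pv * vsub u v i"] vnorm_vunit[OF y]
    by (simp add: B_def vnorm_scale u_def)
  finally show ?thesis
    by simp
qed

lemma loss_grad_lipschitz:
  assumes n: "1 \<le> n" and a: "0 < a" and x: "a \<le> vnorm n x" and y: "0 < vnorm n y"
  shows "vnorm n (vsub (loss_grad d n y) (loss_grad d n x))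
           \<le> (1 + (8 + 12 * real d) / a) * vnorm n (vsub y x)"
proof -
  define D where "D = vnorm n (vsub y x)"
  define u v where "u = vunit n y" and "v = vunit n x"
  define w where "w = vnorm n (vsub u v)"
  have x_pos: "0 < vnorm n x"
    using a x by linarith
  have u: "vnorm n u = 1" and v: "vnorm n v = 1"
    using vnorm_vunit x_pos y by (auto simp: u_def v_def)
  have "w \<le> 2 * D / vnorm n x"
    unfolding w_def D_def u_def v_def by (rule vunit_lipschitz[OF x_pos y])
  also have "\<dots> \<le> 2 * D / a"
    using a x by (intro divide_left_mono) (auto simp: D_def)
  finally have w_le: "w \<le> 2 * D / a" .
  have "vnorm n (vsub (loss_grad d n y) (loss_grad d n x))
      \<le> D + \<bar>radial_coeff d (u 0) - radial_coeff d (v 0)\<bar> + \<bar>radial_coeff d (v 0)\<bar> * w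
          + \<bar>kappa_iter_deriv d (u 0) - kappa_iter_deriv d (v 0)\<bar>"
    unfolding D_def w_def u_def v_def by (rule vnorm_loss_grad_diff_le[OF n y])
  also have "\<dots> \<le> D + (2 + 3 * real d) * w + 2 * w + 3 * real d * w"
    using radial_coeff_lipschitz_sphere[OF n u v, of d] kappa_iter_deriv_lipschitz_sphere[OF n u v, of d]
      abs_radial_coeff_le[OF first_coord_range_sphere[OF n v], of d]
    by (intro add_mono mult_right_mono) (auto simp: w_def)
  also have "\<dots> = D + (4 + 6 * real d) * w"
    by (simp add: algebra_simps)
  also have "\<dots> \<le> D + (4 + 6 * real d) * (2 * D / a)"
    using w_le by (intro add_left_mono mult_left_mono) auto
  also have "\<dots> = (1 + (8 + 12 * real d) / a) * D"
    using a by (simp add: field_simps)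
  finally show ?thesis
    by (simp add: D_def)
qed

lemma kappa_iter_vunit_lipschitz:
  assumes n: "1 \<le> n" and x: "0 < vnorm n x" and y: "0 < vnorm n y"
  shows "\<bar>(kappa ^^ d) (vunit n x 0) - (kappa ^^ d) (vunit n y 0)\<bar> \<le> 2 * vnorm n (vsub x y) / vnorm n y"
proof -
  have "\<bar>(kappa ^^ d) (vunit n x 0) - (kappa ^^ d) (vunit n y 0)\<bar> \<le> \<bar>vunit n x 0 - vunit n y 0\<bar>"
    using lipschitz_on_normD[OF kappa_iter_lipschitz vunit_first_coord_range[OF n] vunit_first_coord_range[OF n]]
    by simp
  also have "\<dots> \<le> vnorm n (vsub (vunit n x) (vunit n y))"
    using abs_le_vnorm[of 0 n "vsub (vunit n x) (vunit n y)"] n by (simp add: vsub_def)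
  also have "\<dots> \<le> 2 * vnorm n (vsub x y) / vnorm n y"
    by (rule vunit_lipschitz[OF y x])
  finally show ?thesis .
qed

lemma loss_lipschitz_on_annulus:
  assumes n: "1 \<le> n" and a: "0 < a"
    and x: "a \<le> vnorm n x" "vnorm n x \<le> b" and y: "a \<le> vnorm n y" "vnorm n y \<le> b"
  shows "\<bar>loss d n x - loss d n y\<bar> \<le> (b + 1 + 2 * b / a) * vnorm n (vsub x y)"
proof -
  define D where "D = vnorm n (vsub x y)"
  define Kx Ky where "Kx = (kappa ^^ d) (vunit n x 0)" and "Ky = (kappa ^^ d) (vunit n y 0)"
  have norm_diff: "\<bar>vnorm n x - vnorm n y\<bar> \<le> D"
    unfolding D_def by (rule abs_vnorm_diff_le)
  have Kx: "\<bar>Kx\<bar> \<le> 1"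
    using kappa_iter_range[OF vunit_first_coord_range[OF n, of x], of d] by (auto simp: Kx_def)
  have "\<bar>Kx - Ky\<bar> \<le> 2 * D / vnorm n y"
    unfolding Kx_def Ky_def D_def using a x y by (intro kappa_iter_vunit_lipschitz[OF n]) auto
  also have "\<dots> \<le> 2 * D / a"
    using a y by (intro divide_left_mono) (auto simp: D_def)
  finally have K_diff: "\<bar>Kx - Ky\<bar> \<le> 2 * D / a" .
  have "(vnorm n x)\<^sup>2 - (vnorm n y)\<^sup>2 = (vnorm n x - vnorm n y) * (vnorm n x + vnorm n y)"
    by (simp add: power2_eq_square algebra_simps)
  then have "\<bar>(vnorm n x)\<^sup>2 - (vnorm n y)\<^sup>2\<bar> = \<bar>vnorm n x - vnorm n y\<bar> * (vnorm n x + vnorm n y)"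
    by (simp add: abs_mult)
  also have "\<dots> \<le> D * (2 * b)"
    using norm_diff x y by (intro mult_mono) auto
  finally have sq_diff: "\<bar>(vnorm n x)\<^sup>2 - (vnorm n y)\<^sup>2\<bar> \<le> 2 * (b * D)"
    by (simp add: mult_ac)
  have "vnorm n x * Kx - vnorm n y * Ky = (vnorm n x - vnorm n y) * Kx + vnorm n y * (Kx - Ky)"
    by (simp add: algebra_simps)
  then have "\<bar>vnorm n x * Kx - vnorm n y * Ky\<bar> \<le> \<bar>vnorm n x - vnorm n y\<bar> * \<bar>Kx\<bar> + vnorm n y * \<bar>Kx - Ky\<bar>"
    by (metis abs_mult abs_of_nonneg abs_triangle_ineq vnorm_nonneg)
  also have "\<dots> \<le> D * 1 + b * (2 * D / a)"
    using norm_diff Kx K_diff y a by (intro add_mono mult_mono) (auto simp: D_def)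
  finally have prod_diff: "\<bar>vnorm n x * Kx - vnorm n y * Ky\<bar> \<le> D + b * (2 * D / a)"
    by simp
  have "loss d n x - loss d n y
      = ((vnorm n x)\<^sup>2 - (vnorm n y)\<^sup>2) / 2 - (vnorm n x * Kx - vnorm n y * Ky)"
    by (simp add: loss_eq[OF n] Kx_def Ky_def diff_divide_distrib)
  also have "\<bar>\<dots>\<bar> \<le> \<bar>(vnorm n x)\<^sup>2 - (vnorm n y)\<^sup>2\<bar> / 2 + \<bar>vnorm n x * Kx - vnorm n y * Ky\<bar>"
    using abs_triangle_ineq4[of "((vnorm n x)\<^sup>2 - (vnorm n y)\<^sup>2) / 2"] by simp
  also have "\<dots> \<le> 2 * (b * D) / 2 + (D + b * (2 * D / a))"
    using sq_diff prod_diff by (intro add_mono divide_right_mono) auto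
  also have "\<dots> = (b + 1 + 2 * b / a) * vnorm n (vsub x y)"
    by (simp add: D_def algebra_simps)
  finally show ?thesis .
qed

lemma opnorm_le:
  assumes "0 \<le> K" "\<And>v. v \<in> Rn n \<Longrightarrow> vnorm n (mv n H v) \<le> K * vnorm n v"
  shows "opnorm n H \<le> K"
  unfolding opnorm_def
proof (rule cSup_least)
  have "(\<lambda>_. 0) \<in> Rn n"
    by (simp add: Rn_def)
  then show "{vnorm n (mv n H v) |v. v \<in> Rn n \<and> vnorm n v \<le> 1} \<noteq> {}"
    by (auto simp: vnorm_def)
next
  fix z assume "z \<in> {vnorm n (mv n H v) |v. v \<in> Rn n \<and> vnorm n v \<le> 1}"
  then obtain v where v: "v \<in> Rn n" "vnorm n v \<le> 1" "z = vnorm n (mv n H v)"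
    by blast
  then have "z \<le> K * vnorm n v"
    using assms(2) by simp
  also have "\<dots> \<le> K"
    using v assms(1) by (simp add: mult_left_le)
  finally show "z \<le> K" .
qed

lemma vnorm_mv_le_of_near_zero_bound:
  assumes near_zero: "\<And>e. 0 < e \<Longrightarrow>
      \<exists>\<delta>>0. \<forall>h\<in>Rn n. vnorm n h < \<delta> \<longrightarrow> vnorm n (mv n H h) \<le> (K + e) * vnorm n h"
    and v: "v \<in> Rn n"
  shows "vnorm n (mv n H v) \<le> K * vnorm n v"
proof (cases "vnorm n v = 0")
  case True
  then have "mv n H v = (\<lambda>_. 0)"
    using vnorm_eq_0_coord[OF True] by (auto simp: mv_def)
  then show ?thesis
    using True by (simp add: vnorm_def)
next
  case False
  then have v_pos: "0 < vnorm n v"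
    using vnorm_nonneg[of n v] by linarith
  show ?thesis
  proof (rule field_le_epsilon)
    fix e :: real assume "0 < e"
    then obtain \<delta> where "\<delta> > 0"
      and \<delta>: "\<forall>h\<in>Rn n. vnorm n h < \<delta> \<longrightarrow> vnorm n (mv n H h) \<le> (K + e / vnorm n v) * vnorm n h"
      using near_zero[of "e / vnorm n v"] v_pos by auto
    define t where "t = \<delta> / (2 * vnorm n v)"
    have t: "t > 0"
      using \<open>\<delta> > 0\<close> v_pos by (simp add: t_def)
    define h where "h = (\<lambda>i. t * v i)"
    have h_norm: "vnorm n h = t * vnorm n v"
      using t by (simp add: h_def vnorm_scale)
    have h: "h \<in> Rn n" "vnorm n h < \<delta>"
      using v h_norm v_pos \<open>\<delta> > 0\<close> by (simp_all add: h_def Rn_def t_def)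
    have "mv n H h = (\<lambda>i. t * mv n H v i)"
      by (rule ext) (simp add: h_def mv_def sum_distrib_left algebra_simps)
    then have "t * vnorm n (mv n H v) = vnorm n (mv n H h)"
      using t by (simp add: vnorm_scale)
    also have "\<dots> \<le> (K + e / vnorm n v) * vnorm n h"
      using \<delta> h by blast
    also have "\<dots> = t * (K * vnorm n v + e)"
      using v_pos by (simp add: h_norm field_simps)
    finally show "vnorm n (mv n H v) \<le> K * vnorm n v + e"
      using t by simp
  qed
qed

lemma mv_near_zero_bound_of_local_lipschitz:
  assumes deriv: "\<forall>e>0. \<exists>\<delta>>0. \<forall>h\<in>Rn n. vnorm n h < \<delta> \<longrightarrow>
                    vnorm n (vsub (vsub (G (vadd x h)) (G x)) (mv n H h)) \<le> e * vnorm n h"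
    and "0 < r"
    and lip: "\<And>h. h \<in> Rn n \<Longrightarrow> vnorm n h < r \<Longrightarrow> vnorm n (vsub (G (vadd x h)) (G x)) \<le> K * vnorm n h"
    and "0 < e"
  shows "\<exists>\<delta>>0. \<forall>h\<in>Rn n. vnorm n h < \<delta> \<longrightarrow> vnorm n (mv n H h) \<le> (K + e) * vnorm n h"
proof -
  obtain \<delta> where "\<delta> > 0" and \<delta>: "\<forall>h\<in>Rn n. vnorm n h < \<delta> \<longrightarrow>
      vnorm n (vsub (vsub (G (vadd x h)) (G x)) (mv n H h)) \<le> e * vnorm n h"
    using deriv \<open>0 < e\<close> by blast
  have "vnorm n (mv n H h) \<le> (K + e) * vnorm n h" if h: "h \<in> Rn n" "vnorm n h < min \<delta> r" for h
  proof -
    have "vnorm n (mv n H h)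
        \<le> vnorm n (vsub (G (vadd x h)) (G x)) + vnorm n (vsub (vsub (G (vadd x h)) (G x)) (mv n H h))"
      using vnorm_vsub_le[of n "vsub (G (vadd x h)) (G x)" "vsub (vsub (G (vadd x h)) (G x)) (mv n H h)"]
      by (simp add: vsub_def)
    also have "\<dots> \<le> K * vnorm n h + e * vnorm n h"
      using lip \<delta> h by (intro add_mono) auto
    finally show ?thesis
      by (simp add: algebra_simps)
  qed
  then show ?thesis
    using \<open>\<delta> > 0\<close> \<open>0 < r\<close> by (intro exI[of _ "min \<delta> r"]) auto
qed

lemma loss_hessian_opnorm_le:
  assumes n: "1 \<le> n" and a: "0 < a" and x: "x \<in> Rn n" "a \<le> vnorm n x"
    and hess: "twice_diff_hess n (loss d n) x H"
  shows "opnorm n H \<le> 1 + (8 + 12 * real d) / a"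
proof -
  define K where "K = 1 + (8 + 12 * real d) / a"
  obtain r G where "r > 0"
    and grad: "\<forall>y\<in>Rn n. vnorm n (vsub y x) < r \<longrightarrow> has_grad n (loss d n) (G y) y"
    and deriv: "\<forall>e>0. \<exists>\<delta>>0. \<forall>h\<in>Rn n. vnorm n h < \<delta> \<longrightarrow>
        vnorm n (vsub (vsub (G (vadd x h)) (G x)) (mv n H h)) \<le> e * vnorm n h"
    using hess unfolding twice_diff_hess_def by blast
  define \<rho> where "\<rho> = min r (a / 2)"
  have G_eq: "G (vadd x h) = loss_grad d n (vadd x h)" "0 < vnorm n (vadd x h)"
    if "h \<in> Rn n" "vnorm n h < \<rho>" for h
  proof -
    have "vsub (vadd x h) x = h"
      by (simp add: vsub_def vadd_def)
    then have "\<bar>vnorm n (vadd x h) - vnorm n x\<bar> \<le> vnorm n h"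
      using abs_vnorm_diff_le[of n "vadd x h" x] by simp
    then show pos: "0 < vnorm n (vadd x h)"
      using that x(2) by (auto simp: \<rho>_def abs_le_iff)
    have "has_grad n (loss d n) (G (vadd x h)) (vadd x h)"
      using grad Rn_vadd[OF x(1) that(1)] that \<open>vsub (vadd x h) x = h\<close> by (simp add: \<rho>_def)
    then show "G (vadd x h) = loss_grad d n (vadd x h)"
      using has_grad_unique has_grad_loss[OF n Rn_vadd[OF x(1) that(1)] pos] by blast
  qed
  have "0 < \<rho>"
    using \<open>r > 0\<close> a by (simp add: \<rho>_def)
  have lip: "vnorm n (vsub (G (vadd x h)) (G x)) \<le> K * vnorm n h"
    if h: "h \<in> Rn n" "vnorm n h < \<rho>" for h
  proof -
    have zero: "(\<lambda>_. 0) \<in> Rn n" "vadd x (\<lambda>_. 0) = x" "vnorm n (\<lambda>_. 0) = 0"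
      by (auto simp: Rn_def vadd_def vnorm_def)
    have "vsub (vadd x h) x = h"
      by (simp add: vsub_def vadd_def)
    then show ?thesis
      using G_eq[OF h] G_eq[OF zero(1)] zero \<open>0 < \<rho>\<close> loss_grad_lipschitz[OF n a x(2) G_eq(2)[OF h], of d]
      by (simp add: K_def)
  qed
  have "vnorm n (mv n H v) \<le> K * vnorm n v" if "v \<in> Rn n" for v
    using vnorm_mv_le_of_near_zero_bound[OF mv_near_zero_bound_of_local_lipschitz[OF deriv \<open>0 < \<rho>\<close> lip] that]
    by blast
  then show ?thesis
    using opnorm_le[of K n H] a by (simp add: K_def)
qed


theorem mainTheorem4:
  fixes d :: nat
  assumes "d \<ge> 1"
  shows "(\<forall>a b. 0 < a \<and> a < b \<longrightarrow> (\<exists>C. \<forall>n\<ge>1. \<forall>x\<in>Rn n. \<forall>y\<in>Rn n.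
            a \<le> vnorm n x \<and> vnorm n x \<le> b \<and> a \<le> vnorm n y \<and> vnorm n y \<le> b \<longrightarrow>
            \<bar>loss d n x - loss d n y\<bar> \<le> C * vnorm n (vsub x y)))
       \<and> (\<forall>a>0. \<exists>C. \<forall>n\<ge>1. \<forall>x\<in>Rn n. \<forall>H.
            a \<le> vnorm n x \<and> twice_diff_hess n (loss d n) x H \<longrightarrow> opnorm n H \<le> C)"
  using loss_lipschitz_on_annulus loss_hessian_opnorm_le by blast

end
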